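(* Let $\mathcal{R}$ be the hyperfinite $II_1$ factor with normalized trace $\tau$, realized as the weak closure of the increasing union $\bigcup_{j\ge0} M_{2^j}(\mathbb{C})$, and let $P_n$ be the orthogonal projection of $L^2(\mathcal{R},\tau)$ onto $M_{2^n}(\mathbb{C})$. Let $(\mathcal{E},D(\mathcal{E}))$ be a Dirichlet form on $L^2(\mathcal{R},\tau)$ with $D(\mathcal{E})\supseteq\bigcup_{j\ge0}M_{2^j}(\mathbb{C})$, and set $\mathcal{E}_n(a)=\mathcal{E}(P_na)$. If $\lim_{n\to\infty}\mathcal{E}_n(a)=\mathcal{E}(a)$ for all $a\in D(\mathcal{E})$, then $\bigcup_{j\ge0}M_{2^j}(\mathbb{C})$ is a form core for $\mathcal{E}$, i.e. it is dense in $D(\mathcal{E})$ with respect to the norm $\|a\|_1=(\mathcal{E}(a)+\|a\|_2^2)^{1/2}$.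
   Context: $M_{2^n}(\mathbb{C})$ is embedded in $M_{2^{n+1}}(\mathbb{C})$ via $a\mapsto \mathrm{diag}(a,a)$. $L^2(\mathcal{R},\tau)$ is the completion of $\mathcal{R}$ in $\|a\|_2=\tau(a^*a)^{1/2}$; $J$ is the antilinear isometry extending $a\mapsto a^*$; $L^2_+$ is the closure of the positive elements; for real ($J$-invariant) $a$, $a\wedge1$ is the Hilbert projection of $a$ onto the $L^2$-closure of $\{b\in L^2_+: b\le 1\}$. A Dirichlet form is a closed, densely defined, nonnegative quadratic form on $L^2(\mathcal{R},\tau)$ that is real ($D(\mathcal{E})$ is $J$-invariant and $\mathcal{E}(Ja)=\mathcal{E}(a)$) and satisfies $\mathcal{E}(a\wedge1)\le\mathcal{E}(a)$ for real $a\in D(\mathcal{E})$. *)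

theory Defs
  imports "HOL-Analysis.Analysis" "Jordan_Normal_Form.Schur_Decomposition"
begin

definition ntrace :: "nat \<Rightarrow> complex mat \<Rightarrow> complex" where
  "ntrace n A = (\<Sum>i<2^n. A $$ (i,i)) / of_nat (2^n)"

text \<open>The embedding M_{2^n} into M_{2^(n+1)}, a \<mapsto> diag(a,a).\<close>
definition diag2 :: "nat \<Rightarrow> complex mat \<Rightarrow> complex mat" where
  "diag2 n A = four_block_mat A (0\<^sub>m (2^n) (2^n)) (0\<^sub>m (2^n) (2^n)) A"

definition pos_mats :: "nat \<Rightarrow> complex mat set" where
  "pos_mats n = {mat_adjoint B * B | B. B \<in> carrier_mat (2^n) (2^n)}"

text \<open>The complex Hilbert space structure: a real Hilbert space with a complex
  scalar multiplication cm extending the real one, with norm (cm c x) = |c| norm x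
  (this determines the complex inner product by polarization).\<close>
definition complex_structure :: "(complex \<Rightarrow> 'h::{real_inner,complete_space} \<Rightarrow> 'h) \<Rightarrow> bool" where
  "complex_structure cm \<longleftrightarrow>
     (\<forall>r x. cm (complex_of_real r) x = r *\<^sub>R x) \<and>
     (\<forall>c x y. cm c (x + y) = cm c x + cm c y) \<and>
     (\<forall>c d x. cm (c + d) x = cm c x + cm d x) \<and>
     (\<forall>c d x. cm (c * d) x = cm c (cm d x)) \<and>
     (\<forall>c x. norm (cm c x) = cmod c * norm x)"

text \<open>iota n is the inclusion of M_{2^n}(C) into L^2(R,tau): complex linear,
  isometric for the norm tau(a* a)^(1/2), compatible with a \<mapsto> diag(a,a),
  and the union of the images is dense (L^2 is the completion of the union).\<close>
definition L2_realization ::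
  "(complex \<Rightarrow> 'h::{real_inner,complete_space} \<Rightarrow> 'h) \<Rightarrow> (nat \<Rightarrow> complex mat \<Rightarrow> 'h) \<Rightarrow> bool" where
  "L2_realization cm \<iota> \<longleftrightarrow>
     complex_structure cm \<and>
     (\<forall>n A B. A \<in> carrier_mat (2^n) (2^n) \<longrightarrow> B \<in> carrier_mat (2^n) (2^n) \<longrightarrow>
        \<iota> n (A + B) = \<iota> n A + \<iota> n B) \<and>
     (\<forall>n c A. A \<in> carrier_mat (2^n) (2^n) \<longrightarrow> \<iota> n (c \<cdot>\<^sub>m A) = cm c (\<iota> n A)) \<and>
     (\<forall>n A. A \<in> carrier_mat (2^n) (2^n) \<longrightarrow>
        norm (\<iota> n A) = sqrt (Re (ntrace n (mat_adjoint A * A)))) \<and>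
     (\<forall>n A. A \<in> carrier_mat (2^n) (2^n) \<longrightarrow> \<iota> (Suc n) (diag2 n A) = \<iota> n A) \<and>
     closure (\<Union>n. \<iota> n ` carrier_mat (2^n) (2^n)) = UNIV"

definition union_alg :: "(nat \<Rightarrow> complex mat \<Rightarrow> 'h) \<Rightarrow> 'h set" where
  "union_alg \<iota> = (\<Union>n. \<iota> n ` carrier_mat (2^n) (2^n))"

definition is_J :: "(nat \<Rightarrow> complex mat \<Rightarrow> 'h::real_normed_vector) \<Rightarrow> ('h \<Rightarrow> 'h) \<Rightarrow> bool" where
  "is_J \<iota> J \<longleftrightarrow> (\<forall>x y. norm (J x - J y) = norm (x - y)) \<and>
     (\<forall>n A. A \<in> carrier_mat (2^n) (2^n) \<longrightarrow> J (\<iota> n A) = \<iota> n (mat_adjoint A))"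

definition L2_pos :: "(nat \<Rightarrow> complex mat \<Rightarrow> 'h::topological_space) \<Rightarrow> 'h set" where
  "L2_pos \<iota> = closure (\<Union>n. \<iota> n ` pos_mats n)"

definition hproj :: "'h::real_inner set \<Rightarrow> 'h \<Rightarrow> 'h" where
  "hproj C a = (SOME b. b \<in> C \<and> (\<forall>c\<in>C. dist a b \<le> dist a c))"

definition unit_L2 :: "(nat \<Rightarrow> complex mat \<Rightarrow> 'h) \<Rightarrow> 'h" where
  "unit_L2 \<iota> = \<iota> 0 (1\<^sub>m 1)"

text \<open>a \<and> 1: projection onto the L^2-closure of {b \<in> L^2_+ : b \<le> 1},
  where b \<le> 1 means 1 - b \<in> L^2_+.\<close>
definition wedge1 :: "(nat \<Rightarrow> complex mat \<Rightarrow> 'h::real_inner) \<Rightarrow> 'h \<Rightarrow> 'h" where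
  "wedge1 \<iota> a = hproj (closure {b \<in> L2_pos \<iota>. unit_L2 \<iota> - b \<in> L2_pos \<iota>}) a"

definition Pn :: "(nat \<Rightarrow> complex mat \<Rightarrow> 'h::real_inner) \<Rightarrow> nat \<Rightarrow> 'h \<Rightarrow> 'h" where
  "Pn \<iota> n a = hproj (\<iota> n ` carrier_mat (2^n) (2^n)) a"

definition form_norm :: "('h::real_normed_vector \<Rightarrow> real) \<Rightarrow> 'h \<Rightarrow> real" where
  "form_norm E a = sqrt (E a + (norm a)\<^sup>2)"

definition nonneg_quadratic_form ::
  "(complex \<Rightarrow> 'h::real_normed_vector \<Rightarrow> 'h) \<Rightarrow> 'h set \<Rightarrow> ('h \<Rightarrow> real) \<Rightarrow> bool" where
  "nonneg_quadratic_form cm D E \<longleftrightarrow>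
     0 \<in> D \<and> (\<forall>a\<in>D. \<forall>b\<in>D. a + b \<in> D) \<and> (\<forall>c. \<forall>a\<in>D. cm c a \<in> D) \<and>
     (\<exists>q :: 'h \<Rightarrow> 'h \<Rightarrow> complex.
        (\<forall>a\<in>D. \<forall>b\<in>D. \<forall>c\<in>D. q (a + b) c = q a c + q b c \<and> q a (b + c) = q a b + q a c) \<and>
        (\<forall>z. \<forall>a\<in>D. \<forall>b\<in>D. q (cm z a) b = cnj z * q a b \<and> q a (cm z b) = z * q a b) \<and>
        (\<forall>a\<in>D. complex_of_real (E a) = q a a)) \<and>
     (\<forall>a\<in>D. 0 \<le> E a)"

definition closed_form :: "'h::real_normed_vector set \<Rightarrow> ('h \<Rightarrow> real) \<Rightarrow> bool" where
  "closed_form D E \<longleftrightarrow>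
     (\<forall>x :: nat \<Rightarrow> 'h. (\<forall>k. x k \<in> D) \<longrightarrow>
        (\<forall>e>0. \<exists>N. \<forall>k\<ge>N. \<forall>l\<ge>N. form_norm E (x k - x l) < e) \<longrightarrow>
        (\<exists>y\<in>D. (\<lambda>k. form_norm E (x k - y)) \<longlonglongrightarrow> 0))"

definition dirichlet_form ::
  "(complex \<Rightarrow> 'h::{real_inner,complete_space} \<Rightarrow> 'h) \<Rightarrow> (nat \<Rightarrow> complex mat \<Rightarrow> 'h) \<Rightarrow> ('h \<Rightarrow> 'h)
     \<Rightarrow> 'h set \<Rightarrow> ('h \<Rightarrow> real) \<Rightarrow> bool" where
  "dirichlet_form cm \<iota> J D E \<longleftrightarrow>
     nonneg_quadratic_form cm D E \<and> closed_form D E \<and> closure D = UNIV \<and>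
     (\<forall>a\<in>D. J a \<in> D \<and> E (J a) = E a) \<and>
     (\<forall>a\<in>D. J a = a \<longrightarrow> wedge1 \<iota> a \<in> D \<and> E (wedge1 \<iota> a) \<le> E a)"

end

theory Submission
  imports Defs
begin

(* The projections P_n a converge to a in L^2 and, by hypothesis, have bounded energy E(P_n a).
   In the Hilbert space D(E) with norm (E(b) + ||b||_2^2)^(1/2) such a sequence has convex
   combinations converging to a, by a Banach-Saks type argument: approximate minimisers of the
   energy on the convex hulls K_N of the tails {P_k a : k >= N} form a Cauchy sequence by the
   parallelogram law; since E is closed they converge in D(E), and the limit must be a because
   K_N shrinks towards a in L^2.  Convex combinations of the P_k a stay in the union of the
   M_{2^n}(C).  The same minimisation over a single closed convex set yields nearest points,
   which makes P_n well defined.  Only the boundedness of E(P_n a) is needed, and neither J nor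
   the Markov property of E enters. *)

section \<open>Minimising sequences and nearest points\<close>

lemma parallelogram_law:
  fixes x y :: "'a::real_inner"
  shows "(norm (x + y))\<^sup>2 + (norm (x - y))\<^sup>2 = 2 * (norm x)\<^sup>2 + 2 * (norm y)\<^sup>2"
  unfolding power2_norm_eq_inner
  by (simp add: inner_diff_left inner_diff_right inner_add_left inner_add_right inner_commute)

lemma midpoint_in_convex:
  assumes "convex S" "u \<in> S" "v \<in> S"
  shows "midpoint u v \<in> S"
proof -
  have "midpoint u v = (1/2) *\<^sub>R u + (1/2) *\<^sub>R v"
    by (simp add: midpoint_def scaleR_right_distrib)
  then show ?thesis
    using convexD[OF assms, of "1/2" "1/2"] by simp
qed

lemma dist_midpoint_parallelogram:
  fixes a u v :: "'a::real_inner"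
  shows "(dist u v)\<^sup>2 = 2 * (dist a u)\<^sup>2 + 2 * (dist a v)\<^sup>2 - 4 * (dist a (midpoint u v))\<^sup>2"
proof -
  have "a - midpoint u v = (1/2) *\<^sub>R ((a - u) + (a - v))"
    by (simp add: midpoint_def algebra_simps flip: scaleR_add_left)
  then have "4 * (dist a (midpoint u v))\<^sup>2 = (norm ((a - u) + (a - v)))\<^sup>2"
    by (simp add: dist_norm power2_eq_square)
  moreover have "(a - u) - (a - v) = v - u"
    by simp
  ultimately show ?thesis
    using parallelogram_law[of "a - u" "a - v"] by (simp add: dist_norm norm_minus_commute)
qed

lemma incseq_Inf_image_decseq:
  fixes G :: "'a \<Rightarrow> 'b::conditionally_complete_lattice"
  assumes "decseq K" and "\<And>N. K N \<noteq> {}" and "bdd_below (G ` K 0)"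
  shows "incseq (\<lambda>N. Inf (G ` K N))"
proof (rule incseq_SucI)
  fix N
  have "G ` K (Suc N) \<subseteq> G ` K N" "G ` K N \<subseteq> G ` K 0"
    using decseqD[OF \<open>decseq K\<close>, of N "Suc N"] decseqD[OF \<open>decseq K\<close>, of 0 N] by auto
  then show "Inf (G ` K N) \<le> Inf (G ` K (Suc N))"
    using assms(2)[of "Suc N"] bdd_below_mono[OF assms(3)] by (intro cInf_superset_mono) auto
qed

text \<open>If the defect of midpoint convexity of G dominates H, approximate minimisers of G on a
  decreasing sequence of convex sets are H-Cauchy: z k and z l lie in K (min k l), so their
  midpoint cannot push G below the infimum there, and these infima converge.\<close>

lemma nested_convex_minimizing_sequence:
  fixes K :: "nat \<Rightarrow> 'a::real_vector set" and G :: "'a \<Rightarrow> real" and H :: "'a \<Rightarrow> 'a \<Rightarrow> real"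
  assumes convex: "\<And>N. convex (K N)" and nonempty: "\<And>N. K N \<noteq> {}" and "decseq K"
    and bdd_below: "bdd_below (G ` K 0)"
    and bounded: "bdd_above (range (\<lambda>N. Inf (G ` K N)))"
    and defect: "\<And>u v. u \<in> K 0 \<Longrightarrow> v \<in> K 0 \<Longrightarrow>
                   H u v \<le> 2 * G u + 2 * G v - 4 * G (midpoint u v)"
  obtains z where "\<And>N. z N \<in> K N" and "\<And>N. G (z N) < Inf (G ` K N) + inverse (Suc N)"
    and "\<And>e. e > 0 \<Longrightarrow> \<exists>N. \<forall>k\<ge>N. \<forall>l\<ge>N. H (z k) (z l) < e"
proof -
  define s where "s N = Inf (G ` K N)" for N
  have K_sub: "K n \<subseteq> K m" if "m \<le> n" for m n
    using decseqD[OF \<open>decseq K\<close> that] .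
  have s_le: "s m \<le> G x" if "x \<in> K m" for m x
    unfolding s_def using bdd_below_mono[OF bdd_below image_mono[OF K_sub[of 0 m]]] that
    by (intro cInf_lower) auto
  have "\<exists>x\<in>K N. G x < s N + inverse (Suc N)" for N
    using cInf_lessD[of "G ` K N" "s N + inverse (Suc N)"] nonempty[of N] unfolding s_def by auto
  then obtain z where z: "\<And>N. z N \<in> K N" "\<And>N. G (z N) < s N + inverse (Suc N)"
    by metis
  have "Cauchy s"
    using LIMSEQ_incseq_SUP[OF bounded incseq_Inf_image_decseq[OF \<open>decseq K\<close> nonempty bdd_below]]
    unfolding s_def[abs_def] by (rule LIMSEQ_imp_Cauchy)
  have "\<exists>N. \<forall>k\<ge>N. \<forall>l\<ge>N. H (z k) (z l) < e" if "e > 0" for e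
  proof -
    obtain N1 where N1: "\<And>m n. m \<ge> N1 \<Longrightarrow> n \<ge> N1 \<Longrightarrow> dist (s m) (s n) < e/8"
      using \<open>Cauchy s\<close> \<open>e > 0\<close> unfolding Cauchy_def by (meson divide_pos_pos zero_less_numeral)
    obtain N2 where N2: "inverse (Suc N2) < e/8"
      using reals_Archimedean \<open>e > 0\<close> by (metis divide_pos_pos zero_less_numeral)
    have "H (z k) (z l) < e" if kl: "k \<ge> max N1 N2" "l \<ge> max N1 N2" for k l
    proof -
      define m where "m = min k l"
      have in_Km: "z k \<in> K m" "z l \<in> K m"
        using z(1) K_sub unfolding m_def by (meson min.cobounded1 min.cobounded2 subsetD)+
      then have "s m \<le> G (midpoint (z k) (z l))"
        using convex midpoint_in_convex s_le by blast
      moreover have "H (z k) (z l) \<le> 2 * G (z k) + 2 * G (z l) - 4 * G (midpoint (z k) (z l))"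
        using defect in_Km K_sub[of 0 m] by blast
      moreover have "inverse (Suc k) \<le> inverse (Suc N2)" "inverse (Suc l) \<le> inverse (Suc N2)"
        using kl by (simp_all add: le_imp_inverse_le)
      moreover have "dist (s k) (s m) < e/8" "dist (s l) (s m) < e/8"
        using N1 kl unfolding m_def by auto
      then have "s k - s m < e/8" "s l - s m < e/8"
        unfolding dist_real_def by linarith+
      ultimately show ?thesis
        using z(2)[of k] z(2)[of l] N2 by linarith
    qed
    then show ?thesis by blast
  qed
  then show ?thesis
    using that z unfolding s_def by blast
qed

lemma nearest_point_exists:
  fixes C :: "'a::{real_inner,complete_space} set"
  assumes "closed C" and "convex C" and "C \<noteq> {}"
  shows "\<exists>b\<in>C. \<forall>c\<in>C. dist a b \<le> dist a c"
proof -
  define G where "G x = (dist a x)\<^sup>2" for x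
  have G_below: "bdd_below (G ` C)"
    unfolding G_def by (rule bdd_belowI[of _ 0]) auto
  have Inf_bounded: "bdd_above (range (\<lambda>_::nat. Inf (G ` C)))"
    by simp
  have defect: "(dist u v)\<^sup>2 \<le> 2 * G u + 2 * G v - 4 * G (midpoint u v)" for u v
    unfolding G_def using dist_midpoint_parallelogram[of u v a] by linarith
  obtain z where z: "\<And>N. z N \<in> C" "\<And>N. G (z N) < Inf (G ` C) + inverse (Suc N)"
    and Cauchy_sq: "\<And>e. e > 0 \<Longrightarrow> \<exists>N. \<forall>k\<ge>N. \<forall>l\<ge>N. (dist (z k) (z l))\<^sup>2 < e"
    using nested_convex_minimizing_sequence[of "\<lambda>_. C" G "\<lambda>u v. (dist u v)\<^sup>2",
        OF assms(2,3) decseq_const G_below Inf_bounded defect]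
    by blast
  have "Cauchy z"
  proof (rule metric_CauchyI)
    fix e :: real assume "e > 0"
    then obtain N where "\<forall>k\<ge>N. \<forall>l\<ge>N. (dist (z k) (z l))\<^sup>2 < e\<^sup>2"
      using Cauchy_sq by force
    then show "\<exists>N. \<forall>k\<ge>N. \<forall>l\<ge>N. dist (z k) (z l) < e"
      using \<open>e > 0\<close> by (meson less_imp_le power2_less_imp_less)
  qed
  then obtain y where y: "z \<longlonglongrightarrow> y"
    using Cauchy_convergent convergent_def by blast
  have "y \<in> C"
    using closed_sequentially[OF \<open>closed C\<close>] z(1) y by blast
  have "G y \<le> Inf (G ` C)"
  proof (rule LIMSEQ_le)
    show "(\<lambda>N. G (z N)) \<longlonglongrightarrow> G y"
      unfolding G_def by (intro tendsto_intros y)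
    show "(\<lambda>N. Inf (G ` C) + inverse (Suc N)) \<longlonglongrightarrow> Inf (G ` C)"
      by (rule LIMSEQ_inverse_real_of_nat_add)
    show "\<exists>N. \<forall>n\<ge>N. G (z n) \<le> Inf (G ` C) + inverse (Suc n)"
      using z(2) less_imp_le by blast
  qed
  moreover have "Inf (G ` C) \<le> G c" if "c \<in> C" for c
    using that unfolding G_def by (intro cInf_lower bdd_belowI[of _ 0]) auto
  ultimately show ?thesis
    using \<open>y \<in> C\<close> unfolding G_def by (meson order_trans power2_le_imp_le zero_le_dist)
qed

lemma hproj_nearest:
  fixes C :: "'a::{real_inner,complete_space} set"
  assumes "closed C" and "convex C" and "C \<noteq> {}"
  shows "hproj C a \<in> C"
    and "\<And>c. c \<in> C \<Longrightarrow> dist a (hproj C a) \<le> dist a c"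
  using someI_ex[OF nearest_point_exists[OF assms, of a, unfolded Bex_def]]
  unfolding hproj_def by blast+

lemma convex_hull_tails_tendsto:
  fixes x :: "nat \<Rightarrow> 'a::real_normed_vector"
  assumes "x \<longlonglongrightarrow> a" and "\<And>N. z N \<in> convex hull (x ` {N..})"
  shows "z \<longlonglongrightarrow> a"
  unfolding lim_sequentially
proof (intro allI impI)
  fix r :: real assume "r > 0"
  then obtain N where N: "\<And>n. n \<ge> N \<Longrightarrow> dist (x n) a < r/2"
    using \<open>x \<longlonglongrightarrow> a\<close> unfolding lim_sequentially by (meson half_gt_zero)
  have "dist (z n) a < r" if "n \<ge> N" for n
  proof -
    have "x ` {n..} \<subseteq> cball a (r/2)"
      using N that by (auto simp: dist_commute less_imp_le)
    then have "convex hull (x ` {n..}) \<subseteq> cball a (r/2)"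
      by (intro hull_minimal convex_cball)
    then show ?thesis
      using assms(2)[of n] \<open>r > 0\<close> by (auto simp: dist_commute)
  qed
  then show "\<exists>N. \<forall>n\<ge>N. dist (z n) a < r" by blast
qed

section \<open>Nonnegative quadratic forms\<close>

context
  fixes cm :: "complex \<Rightarrow> 'a::real_inner \<Rightarrow> 'a" and D :: "'a set" and E :: "'a \<Rightarrow> real"
  assumes cm_real: "\<And>r x. cm (complex_of_real r) x = r *\<^sub>R x"
    and quadratic: "nonneg_quadratic_form cm D E"
begin

lemma form_domain_subspace: "Real_Vector_Spaces.subspace D"
proof -
  have "0 \<in> D" "\<forall>a\<in>D. \<forall>b\<in>D. a + b \<in> D" "\<forall>c. \<forall>a\<in>D. cm c a \<in> D"
    using quadratic unfolding nonneg_quadratic_form_def by blast+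
  then show ?thesis
    unfolding real_vector.subspace_def by (simp flip: cm_real)
qed

lemma form_nonneg: "a \<in> D \<Longrightarrow> 0 \<le> E a"
  using quadratic unfolding nonneg_quadratic_form_def by blast

lemma form_scaleR_parallelogram:
  assumes a: "a \<in> D" and b: "b \<in> D"
  shows form_scaleR: "E (r *\<^sub>R a) = r\<^sup>2 * E a"
    and form_parallelogram: "E (a + b) + E (a - b) = 2 * E a + 2 * E b"
proof -
  obtain q :: "'a \<Rightarrow> 'a \<Rightarrow> complex" where
    q_add: "\<And>a b c. a\<in>D \<Longrightarrow> b\<in>D \<Longrightarrow> c\<in>D \<Longrightarrow> q (a + b) c = q a c + q b c \<and> q a (b + c) = q a b + q a c"
    and q_scale: "\<And>z a b. a\<in>D \<Longrightarrow> b\<in>D \<Longrightarrow> q (cm z a) b = cnj z * q a b \<and> q a (cm z b) = z * q a b"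
    and q_diag: "\<And>a. a\<in>D \<Longrightarrow> complex_of_real (E a) = q a a"
    using quadratic unfolding nonneg_quadratic_form_def by metis
  have D_scale: "r *\<^sub>R x \<in> D" if "x \<in> D" for x r
    using form_domain_subspace that by (rule subspace_scale)
  have q_scaleR: "q (r *\<^sub>R x) y = r * q x y" "q x (r *\<^sub>R y) = r * q x y"
    if "x \<in> D" "y \<in> D" for x y r
    using q_scale[OF that, of "complex_of_real r"] by (simp_all add: cm_real)
  have "complex_of_real (E (r *\<^sub>R a)) = complex_of_real (r\<^sup>2 * E a)"
    using q_diag[OF D_scale[OF a]] q_scaleR[OF a D_scale[OF a]] q_scaleR[OF a a] q_diag[OF a]
    by (simp add: power2_eq_square)
  then show "E (r *\<^sub>R a) = r\<^sup>2 * E a"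
    using of_real_eq_iff by blast
  have expand: "q (a + t *\<^sub>R b) (a + t *\<^sub>R b) = q a a + t * q a b + t * q b a + t\<^sup>2 * q b b" for t
    using a b D_scale q_add q_scaleR subspace_add[OF form_domain_subspace]
    by (simp add: power2_eq_square algebra_simps)
  have "complex_of_real (E (a + b) + E (a - b)) = complex_of_real (2 * E a + 2 * E b)"
    using expand[of 1] expand[of "-1"] q_diag a b subspace_add[OF form_domain_subspace]
      subspace_diff[OF form_domain_subspace]
    by simp
  then show "E (a + b) + E (a - b) = 2 * E a + 2 * E b"
    using of_real_eq_iff by blast
qed

lemma form_norm_sq: "a \<in> D \<Longrightarrow> (form_norm E a)\<^sup>2 = E a + (norm a)\<^sup>2"
  unfolding form_norm_def using form_nonneg by simp

lemma norm_le_form_norm: "a \<in> D \<Longrightarrow> norm a \<le> form_norm E a"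
  unfolding form_norm_def using form_nonneg by (simp add: real_le_rsqrt)

lemma form_norm_minus_commute: "a \<in> D \<Longrightarrow> b \<in> D \<Longrightarrow> form_norm E (a - b) = form_norm E (b - a)"
  using form_scaleR[of "a - b" "a - b" "-1"] subspace_diff[OF form_domain_subspace]
  by (simp add: form_norm_def norm_minus_commute)

lemma form_norm_midpoint_parallelogram:
  assumes "u \<in> D" "v \<in> D"
  shows "(form_norm E (u - v))\<^sup>2
           = 2 * (form_norm E u)\<^sup>2 + 2 * (form_norm E v)\<^sup>2 - 4 * (form_norm E (midpoint u v))\<^sup>2"
proof -
  have uv: "u + v \<in> D" "u - v \<in> D" "midpoint u v \<in> D"
    using assms form_domain_subspace
    by (auto simp: midpoint_def intro: subspace_add subspace_diff subspace_scale)
  have "4 * E (midpoint u v) = E (u + v)"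
    using form_scaleR[OF uv(1) uv(1), of "inverse 2"] by (simp add: midpoint_def power2_eq_square)
  moreover have "4 * (norm (midpoint u v))\<^sup>2 = (norm (u + v))\<^sup>2"
    by (simp add: midpoint_def power2_eq_square)
  ultimately show ?thesis
    using form_parallelogram[OF assms] parallelogram_law[of u v] form_norm_sq assms uv
    by simp
qed

lemma closed_form_Cauchy_tendsto:
  assumes "closed_form D E" and zD: "\<And>k. z k \<in> D"
    and "\<And>e. e > 0 \<Longrightarrow> \<exists>N. \<forall>k\<ge>N. \<forall>l\<ge>N. form_norm E (z k - z l) < e"
  obtains y where "y \<in> D" and "(\<lambda>k. form_norm E (z k - y)) \<longlonglongrightarrow> 0" and "z \<longlonglongrightarrow> y"
proof -
  obtain y where "y \<in> D" and z_y: "(\<lambda>k. form_norm E (z k - y)) \<longlonglongrightarrow> 0"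
    using assms unfolding closed_form_def by blast
  have "(\<lambda>k. z k - y) \<longlonglongrightarrow> 0"
  proof (rule Lim_null_comparison[OF always_eventually z_y], intro allI)
    show "norm (z k - y) \<le> form_norm E (z k - y)" for k
      using norm_le_form_norm subspace_diff[OF form_domain_subspace zD \<open>y \<in> D\<close>] by blast
  qed
  then show ?thesis
    using that \<open>y \<in> D\<close> z_y by (simp add: LIM_zero_iff)
qed

lemma convex_hull_tails_form_Cauchy:
  fixes x :: "nat \<Rightarrow> 'a"
  assumes xD: "\<And>n. x n \<in> D" and "bdd_above (range (\<lambda>n. form_norm E (x n)))"
  obtains z where "\<And>N. z N \<in> convex hull (x ` {N..})"
    and "\<And>e. e > 0 \<Longrightarrow> \<exists>N. \<forall>k\<ge>N. \<forall>l\<ge>N. form_norm E (z k - z l) < e"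
proof -
  define K where "K N = convex hull (x ` {N..})" for N
  define G where "G w = (form_norm E w)\<^sup>2" for w
  have K_D: "K N \<subseteq> D" for N
    unfolding K_def using xD subspace_imp_convex[OF form_domain_subspace]
    by (intro hull_minimal) auto
  have x_K: "x N \<in> K N" for N
    unfolding K_def by (intro hull_inc imageI) simp
  obtain B where B: "\<And>n. form_norm E (x n) \<le> B"
    using \<open>bdd_above _\<close> by (auto simp: bdd_above_def)
  have G_below: "bdd_below (G ` K N)" for N
    unfolding G_def by (rule bdd_belowI[of _ 0]) auto
  have Inf_le: "Inf (G ` K N) \<le> B\<^sup>2" for N
  proof -
    have "Inf (G ` K N) \<le> G (x N)"
      using x_K G_below by (intro cInf_lower) auto
    also have "\<dots> \<le> B\<^sup>2"
      using B[of N] form_nonneg[OF xD[of N]] unfolding G_def form_norm_def by (intro power_mono) auto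
    finally show ?thesis .
  qed
  have bounded_inf: "bdd_above (range (\<lambda>N. Inf (G ` K N)))"
    using Inf_le by (auto intro!: bdd_aboveI2)
  have K_convex: "convex (K N)" for N
    unfolding K_def by simp
  have K_nonempty: "K N \<noteq> {}" for N
    using x_K by blast
  have "decseq K"
    unfolding K_def decseq_def by (auto intro!: hull_mono image_mono)
  have defect: "G (u - v) \<le> 2 * G u + 2 * G v - 4 * G (midpoint u v)" if "u \<in> K 0" "v \<in> K 0" for u v
    using form_norm_midpoint_parallelogram that K_D unfolding G_def by (simp add: subset_iff)
  obtain z where z_K: "\<And>N. z N \<in> K N" and "\<And>N. G (z N) < Inf (G ` K N) + inverse (Suc N)"
    and z_Cauchy: "\<And>e. e > 0 \<Longrightarrow> \<exists>N. \<forall>k\<ge>N. \<forall>l\<ge>N. G (z k - z l) < e"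
    using nested_convex_minimizing_sequence[of K G "\<lambda>u v. G (u - v)",
        OF K_convex K_nonempty \<open>decseq K\<close> G_below bounded_inf defect]
    by blast
  have "\<exists>N. \<forall>k\<ge>N. \<forall>l\<ge>N. form_norm E (z k - z l) < r" if "r > 0" for r
  proof -
    obtain N where "\<forall>k\<ge>N. \<forall>l\<ge>N. G (z k - z l) < r\<^sup>2"
      using z_Cauchy \<open>r > 0\<close> by force
    then show ?thesis
      using \<open>r > 0\<close> unfolding G_def by (meson less_imp_le power2_less_imp_less)
  qed
  then show ?thesis
    using that z_K unfolding K_def by blast
qed

lemma closed_form_convex_hull_approx:
  assumes "closed_form D E" and xD: "\<And>n. x n \<in> D"
    and "bdd_above (range (\<lambda>n. E (x n)))" and "x \<longlonglongrightarrow> a" and "e > 0"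
  shows "\<exists>b\<in>convex hull (range x). form_norm E (a - b) < e"
proof -
  obtain B where B: "\<And>n. E (x n) \<le> B"
    using \<open>bdd_above _\<close> by (auto simp: bdd_above_def)
  obtain M where M: "\<And>n. norm (x n) \<le> M"
    using convergent_imp_Bseq[OF convergentI[OF \<open>x \<longlonglongrightarrow> a\<close>]] by (auto simp: Bseq_def)
  have "form_norm E (x n) \<le> sqrt (B + M\<^sup>2)" for n
    unfolding form_norm_def using B[of n] M[of n] norm_ge_zero[of "x n"]
    by (intro real_sqrt_le_mono add_mono power_mono) auto
  then have bounded: "bdd_above (range (\<lambda>n. form_norm E (x n)))"
    by (auto intro!: bdd_aboveI2)
  obtain z where z_K: "\<And>N. z N \<in> convex hull (x ` {N..})"
    and z_Cauchy: "\<And>e. e > 0 \<Longrightarrow> \<exists>N. \<forall>k\<ge>N. \<forall>l\<ge>N. form_norm E (z k - z l) < e"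
    using convex_hull_tails_form_Cauchy[OF xD bounded] by blast
  have "convex hull (x ` {k..}) \<subseteq> D" for k
    using xD subspace_imp_convex[OF form_domain_subspace] by (intro hull_minimal) auto
  then have z_D: "z k \<in> D" for k
    using z_K by blast
  obtain y where "y \<in> D" and z_y: "(\<lambda>k. form_norm E (z k - y)) \<longlonglongrightarrow> 0" and "z \<longlonglongrightarrow> y"
    using closed_form_Cauchy_tendsto[OF \<open>closed_form D E\<close> z_D z_Cauchy] .
  moreover have "z \<longlonglongrightarrow> a"
    using \<open>x \<longlonglongrightarrow> a\<close> z_K by (rule convex_hull_tails_tendsto)
  ultimately have "y = a"
    using LIMSEQ_unique by blast
  then obtain k where k: "form_norm E (z k - a) < e"
    using order_tendstoD(2)[OF z_y \<open>e > 0\<close>] unfolding eventually_sequentially by blast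
  have "form_norm E (a - z k) = form_norm E (z k - a)"
    using form_norm_minus_commute z_D \<open>y \<in> D\<close> \<open>y = a\<close> by blast
  moreover have "z k \<in> convex hull (range x)"
    using z_K[of k] hull_mono[of "x ` {k..}" "range x"] by blast
  ultimately show ?thesis
    using k by (intro bexI[of _ "z k"]) simp_all
qed

end

section \<open>The matrix algebras inside L^2\<close>

definition level :: "(nat \<Rightarrow> complex mat \<Rightarrow> 'h) \<Rightarrow> nat \<Rightarrow> 'h set" where
  "level \<iota> n = \<iota> n ` carrier_mat (2^n) (2^n)"

lemma trace_adjoint_mult_self:
  fixes A :: "complex mat"
  assumes "A \<in> carrier_mat n n"
  shows "Re (\<Sum>i<n. (mat_adjoint A * A) $$ (i,i)) = (\<Sum>i<n. \<Sum>j<n. (cmod (A $$ (j,i)))\<^sup>2)"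
proof -
  have "(mat_adjoint A * A) $$ (i,i) = (\<Sum>j<n. cnj (A $$ (j,i)) * A $$ (j,i))" if "i < n" for i
    using assms that
    by (simp add: scalar_prod_def mat_adjoint_def mat_of_rows_index atLeast0LessThan)
  then have "(\<Sum>i<n. (mat_adjoint A * A) $$ (i,i)) = (\<Sum>i<n. \<Sum>j<n. cnj (A $$ (j,i)) * A $$ (j,i))"
    by simp
  moreover have "Re (cnj z * z) = (cmod z)\<^sup>2" for z
    using cmod_power2[of z] by (simp add: power2_eq_square)
  ultimately show ?thesis
    by (simp only: Re_sum)
qed

context
  fixes cm :: "complex \<Rightarrow> 'h::{real_inner,complete_space} \<Rightarrow> 'h" and \<iota> :: "nat \<Rightarrow> complex mat \<Rightarrow> 'h"
  assumes realization: "L2_realization cm \<iota>"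
begin

lemma realization_cm_real: "cm (complex_of_real r) x = r *\<^sub>R x"
  using realization unfolding L2_realization_def complex_structure_def by simp

lemma iota_add: "A \<in> carrier_mat (2^n) (2^n) \<Longrightarrow> B \<in> carrier_mat (2^n) (2^n) \<Longrightarrow>
    \<iota> n (A + B) = \<iota> n A + \<iota> n B"
  using realization unfolding L2_realization_def by blast

lemma iota_scaleR: "A \<in> carrier_mat (2^n) (2^n) \<Longrightarrow> \<iota> n (complex_of_real r \<cdot>\<^sub>m A) = r *\<^sub>R \<iota> n A"
  using realization realization_cm_real unfolding L2_realization_def by metis

lemma iota_diff:
  assumes "A \<in> carrier_mat (2^n) (2^n)" "B \<in> carrier_mat (2^n) (2^n)"
  shows "\<iota> n (A - B) = \<iota> n A - \<iota> n B"
proof -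
  have "A - B = A + complex_of_real (-1) \<cdot>\<^sub>m B"
    using assms by (intro eq_matI) auto
  then show ?thesis
    using iota_add[OF assms(1), of "complex_of_real (-1) \<cdot>\<^sub>m B"] iota_scaleR[OF assms(2), of "-1"] assms
    by simp
qed

lemma norm_iota_sq:
  assumes "A \<in> carrier_mat (2^n) (2^n)"
  shows "(norm (\<iota> n A))\<^sup>2 = (\<Sum>i<2^n. \<Sum>j<2^n. (cmod (A $$ (j,i)))\<^sup>2) / 2^n"
proof -
  have "norm (\<iota> n A) = sqrt (Re (ntrace n (mat_adjoint A * A)))"
    using realization assms unfolding L2_realization_def by blast
  also have "Re (ntrace n (mat_adjoint A * A)) = (\<Sum>i<2^n. \<Sum>j<2^n. (cmod (A $$ (j,i)))\<^sup>2) / 2^n"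
    using trace_adjoint_mult_self[OF assms] unfolding ntrace_def by (simp add: Re_divide_of_nat)
  finally show ?thesis
    by (simp add: sum_nonneg)
qed

lemma entry_le_norm_iota:
  assumes "A \<in> carrier_mat (2^n) (2^n)" "i < 2^n" "j < 2^n"
  shows "cmod (A $$ (j,i)) \<le> sqrt (2^n) * norm (\<iota> n A)"
proof -
  have "(cmod (A $$ (j,i)))\<^sup>2 \<le> (\<Sum>j<2^n. (cmod (A $$ (j,i)))\<^sup>2)"
    using assms(3) by (intro member_le_sum) auto
  also have "\<dots> \<le> (\<Sum>i<2^n. \<Sum>j<2^n. (cmod (A $$ (j,i)))\<^sup>2)"
    using assms(2) by (intro member_le_sum[of i _ "\<lambda>i. \<Sum>j<2^n. (cmod (A $$ (j,i)))\<^sup>2"] sum_nonneg) auto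
  also have "\<dots> = (sqrt (2^n) * norm (\<iota> n A))\<^sup>2"
    using norm_iota_sq[OF assms(1)] by (simp add: power_mult_distrib)
  finally show ?thesis
    by (rule power2_le_imp_le) simp
qed

lemma level_subspace: "Real_Vector_Spaces.subspace (level \<iota> n)"
  unfolding real_vector.subspace_def level_def
proof (intro conjI ballI allI)
  have "0 = \<iota> n (complex_of_real 0 \<cdot>\<^sub>m 0\<^sub>m (2^n) (2^n))"
    using iota_scaleR[of "0\<^sub>m (2^n) (2^n)" n 0] by simp
  then show "0 \<in> \<iota> n ` carrier_mat (2^n) (2^n)"
    by (rule image_eqI) simp
  show "x + y \<in> \<iota> n ` carrier_mat (2^n) (2^n)"
    if xy: "x \<in> \<iota> n ` carrier_mat (2^n) (2^n)" "y \<in> \<iota> n ` carrier_mat (2^n) (2^n)" for x y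
  proof -
    obtain A B where "A \<in> carrier_mat (2^n) (2^n)" "B \<in> carrier_mat (2^n) (2^n)" "x = \<iota> n A" "y = \<iota> n B"
      using xy by blast
    then show ?thesis
      using iota_add by (intro image_eqI[of _ _ "A + B"]) auto
  qed
  show "c *\<^sub>R x \<in> \<iota> n ` carrier_mat (2^n) (2^n)" if x: "x \<in> \<iota> n ` carrier_mat (2^n) (2^n)" for c x
  proof -
    obtain A where "A \<in> carrier_mat (2^n) (2^n)" "x = \<iota> n A"
      using x by blast
    then show ?thesis
      using iota_scaleR by (intro image_eqI[of _ _ "complex_of_real c \<cdot>\<^sub>m A"]) auto
  qed
qed

lemma level_Suc: "level \<iota> n \<subseteq> level \<iota> (Suc n)"
proof
  fix u assume "u \<in> level \<iota> n"
  then obtain A where A: "A \<in> carrier_mat (2^n) (2^n)" "u = \<iota> n A"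
    unfolding level_def by blast
  then have "u = \<iota> (Suc n) (diag2 n A)"
    using realization unfolding L2_realization_def by simp
  moreover have "diag2 n A \<in> carrier_mat (2^Suc n) (2^Suc n)"
    unfolding diag2_def using A(1) by (auto simp: mult_2 intro!: four_block_carrier_mat)
  ultimately show "u \<in> level \<iota> (Suc n)"
    unfolding level_def by blast
qed

lemma level_mono: "m \<le> n \<Longrightarrow> level \<iota> m \<subseteq> level \<iota> n"
  using lift_Suc_mono_le[of "level \<iota>"] level_Suc by blast

lemma union_alg_subspace: "Real_Vector_Spaces.subspace (union_alg \<iota>)"
  unfolding union_alg_def level_def[symmetric]
proof (rule real_vector.subspaceI)
  show "0 \<in> (\<Union>n. level \<iota> n)"
    using subspace_0[OF level_subspace] by blast
  show "x + y \<in> (\<Union>n. level \<iota> n)" if xy: "x \<in> (\<Union>n. level \<iota> n)" "y \<in> (\<Union>n. level \<iota> n)" for x y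
  proof -
    obtain m k where "x \<in> level \<iota> m" "y \<in> level \<iota> k"
      using xy by blast
    then have "x \<in> level \<iota> (max m k)" "y \<in> level \<iota> (max m k)"
      using level_mono[of m "max m k"] level_mono[of k "max m k"] by auto
    then have "x + y \<in> level \<iota> (max m k)"
      by (rule subspace_add[OF level_subspace])
    then show ?thesis by blast
  qed
  show "c *\<^sub>R x \<in> (\<Union>n. level \<iota> n)" if "x \<in> (\<Union>n. level \<iota> n)" for c x
    using that subspace_scale[OF level_subspace] by blast
qed

lemma Cauchy_level_entries:
  assumes A: "\<And>k. A k \<in> carrier_mat (2^n) (2^n)" and "Cauchy (\<lambda>k. \<iota> n (A k))"
    and "i < 2^n" "j < 2^n"
  shows "Cauchy (\<lambda>k. A k $$ (j,i))"
proof (rule metric_CauchyI)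
  fix e :: real assume "e > 0"
  then have "e / sqrt (2^n) > 0"
    by simp
  then obtain N where N: "\<And>k l. k \<ge> N \<Longrightarrow> l \<ge> N \<Longrightarrow> dist (\<iota> n (A k)) (\<iota> n (A l)) < e / sqrt (2^n)"
    using \<open>Cauchy (\<lambda>k. \<iota> n (A k))\<close> unfolding Cauchy_def by blast
  have "dist (A k $$ (j,i)) (A l $$ (j,i)) < e" if "k \<ge> N" "l \<ge> N" for k l
  proof -
    have "dist (A k $$ (j,i)) (A l $$ (j,i)) = cmod ((A k - A l) $$ (j,i))"
      using assms(3,4) A[of k] A[of l] by (simp add: dist_norm)
    also have "\<dots> \<le> sqrt (2^n) * norm (\<iota> n (A k - A l))"
      using entry_le_norm_iota[of "A k - A l" n i j] minus_carrier_mat[OF A[of l]] A[of k] A[of l] assms(3,4)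
      by simp
    also have "\<dots> = sqrt (2^n) * dist (\<iota> n (A k)) (\<iota> n (A l))"
      using iota_diff[OF A A] by (simp add: dist_norm)
    also have "\<dots> < e"
      using N[OF that] by (simp add: pos_less_divide_eq mult.commute)
    finally show ?thesis .
  qed
  then show "\<exists>N. \<forall>k\<ge>N. \<forall>l\<ge>N. dist (A k $$ (j,i)) (A l $$ (j,i)) < e" by blast
qed

lemma level_tendsto_entrywise:
  assumes A: "\<And>k. A k \<in> carrier_mat (2^n) (2^n)" and L: "L \<in> carrier_mat (2^n) (2^n)"
    and lim: "\<And>i j. i < 2^n \<Longrightarrow> j < 2^n \<Longrightarrow> (\<lambda>k. A k $$ (j,i)) \<longlonglongrightarrow> L $$ (j,i)"
  shows "(\<lambda>k. \<iota> n (A k)) \<longlonglongrightarrow> \<iota> n L"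
proof -
  have sq: "(norm (\<iota> n (A k) - \<iota> n L))\<^sup>2
      = (\<Sum>i<2^n. \<Sum>j<2^n. (cmod (A k $$ (j,i) - L $$ (j,i)))\<^sup>2) / 2^n" for k
    using norm_iota_sq[of "A k - L" n] iota_diff[OF A L] A[of k] L minus_carrier_mat[OF L] by simp
  have "(\<lambda>k. A k $$ (j,i) - L $$ (j,i)) \<longlonglongrightarrow> 0" if "i < 2^n" "j < 2^n" for i j
    using LIM_zero[OF lim[OF that]] .
  then have "(\<lambda>k. (\<Sum>i<2^n. \<Sum>j<2^n. (cmod (A k $$ (j,i) - L $$ (j,i)))\<^sup>2) / 2^n)
      \<longlonglongrightarrow> (\<Sum>i<(2::nat)^n. \<Sum>j<(2::nat)^n. (cmod 0)\<^sup>2) / 2^n"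
    by (intro tendsto_divide tendsto_const tendsto_sum tendsto_power tendsto_norm) auto
  then have "(\<lambda>k. (norm (\<iota> n (A k) - \<iota> n L))\<^sup>2) \<longlonglongrightarrow> 0"
    unfolding sq by simp
  then have "(\<lambda>k. sqrt ((norm (\<iota> n (A k) - \<iota> n L))\<^sup>2)) \<longlonglongrightarrow> sqrt 0"
    by (rule tendsto_real_sqrt)
  then show ?thesis
    by (simp add: tendsto_norm_zero_iff LIM_zero_iff)
qed

lemma level_closed: "closed (level \<iota> n)"
  unfolding closed_sequential_limits
proof (intro allI impI, elim conjE)
  fix x l assume "\<forall>k. x k \<in> level \<iota> n" and "x \<longlonglongrightarrow> l"
  then have "\<forall>k. \<exists>B. B \<in> carrier_mat (2^n) (2^n) \<and> x k = \<iota> n B"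
    unfolding level_def by blast
  then obtain A where "\<forall>k. A k \<in> carrier_mat (2^n) (2^n) \<and> x k = \<iota> n (A k)"
    by (rule choice[THEN exE])
  then have A: "\<And>k. A k \<in> carrier_mat (2^n) (2^n)" and x_eq: "x = (\<lambda>k. \<iota> n (A k))"
    by auto
  have Cauchy: "Cauchy (\<lambda>k. \<iota> n (A k))"
    using LIMSEQ_imp_Cauchy[OF \<open>x \<longlonglongrightarrow> l\<close>] unfolding x_eq .
  have entries: "convergent (\<lambda>k. A k $$ (j,i))" if "i < 2^n" "j < 2^n" for i j
    using Cauchy_convergent[OF Cauchy_level_entries[OF A Cauchy that]] .
  define L where "L = mat (2^n) (2^n) (\<lambda>(j,i). lim (\<lambda>k. A k $$ (j,i)))"
  have L: "L \<in> carrier_mat (2^n) (2^n)"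
    unfolding L_def by simp
  have "(\<lambda>k. A k $$ (j,i)) \<longlonglongrightarrow> L $$ (j,i)" if "i < 2^n" "j < 2^n" for i j
    using entries[OF that] that unfolding L_def by (simp add: convergent_LIMSEQ_iff)
  then have "x \<longlonglongrightarrow> \<iota> n L"
    unfolding x_eq by (rule level_tendsto_entrywise[OF A L])
  then show "l \<in> level \<iota> n"
    using LIMSEQ_unique[OF \<open>x \<longlonglongrightarrow> l\<close>] L unfolding level_def by blast
qed

lemma Pn_level:
  shows Pn_in_level: "Pn \<iota> n a \<in> level \<iota> n"
    and Pn_nearest: "c \<in> level \<iota> n \<Longrightarrow> dist a (Pn \<iota> n a) \<le> dist a c"
  using hproj_nearest[OF level_closed subspace_imp_convex[OF level_subspace]]
    subspace_0[OF level_subspace]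
  unfolding Pn_def level_def by blast+

lemma Pn_tendsto: "(\<lambda>n. Pn \<iota> n a) \<longlonglongrightarrow> a"
  unfolding lim_sequentially
proof (intro allI impI)
  fix e :: real assume "e > 0"
  have "a \<in> closure (\<Union>n. level \<iota> n)"
    using realization unfolding L2_realization_def level_def by simp
  then obtain m u where "u \<in> level \<iota> m" "dist u a < e"
    using \<open>e > 0\<close> closure_approachable by (metis UN_E)
  then have "dist (Pn \<iota> n a) a < e" if "n \<ge> m" for n
    using Pn_nearest level_mono[OF that] by (metis dist_commute order_le_less_trans subsetD)
  then show "\<exists>N. \<forall>n\<ge>N. dist (Pn \<iota> n a) a < e" by blast
qed

end

theorem theorem2p5:
  fixes cm :: "complex \<Rightarrow> 'h::{real_inner,complete_space} \<Rightarrow> 'h"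
    and \<iota> :: "nat \<Rightarrow> complex mat \<Rightarrow> 'h"
    and J :: "'h \<Rightarrow> 'h"
    and D :: "'h set"
    and E :: "'h \<Rightarrow> real"
  assumes "L2_realization cm \<iota>"
    and "is_J \<iota> J"
    and "dirichlet_form cm \<iota> J D E"
    and "union_alg \<iota> \<subseteq> D"
    and "\<forall>a\<in>D. (\<lambda>n. E (Pn \<iota> n a)) \<longlonglongrightarrow> E a"
  shows "\<forall>a\<in>D. \<forall>e>0. \<exists>b\<in>union_alg \<iota>. form_norm E (a - b) < e"
proof (intro ballI allI impI)
  fix a e assume "a \<in> D" and "(e::real) > 0"
  note realization = \<open>L2_realization cm \<iota>\<close>
  have form: "nonneg_quadratic_form cm D E" and closed: "closed_form D E"
    using \<open>dirichlet_form cm \<iota> J D E\<close> by (simp_all add: dirichlet_form_def)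
  have P_union: "Pn \<iota> n a \<in> union_alg \<iota>" for n
    using Pn_in_level[OF realization] unfolding union_alg_def level_def by (rule UN_I[OF UNIV_I])
  then have P_D: "Pn \<iota> n a \<in> D" for n
    using \<open>union_alg \<iota> \<subseteq> D\<close> by blast
  have "(\<lambda>n. E (Pn \<iota> n a)) \<longlonglongrightarrow> E a"
    using assms(5) \<open>a \<in> D\<close> by blast
  then have bounded: "bdd_above (range (\<lambda>n. E (Pn \<iota> n a)))"
    by (intro bounded_imp_bdd_above convergent_imp_bounded)
  obtain b where "b \<in> convex hull (range (\<lambda>n. Pn \<iota> n a))" and "form_norm E (a - b) < e"
    using closed_form_convex_hull_approx[OF realization_cm_real[OF realization] form closed P_D bounded
        Pn_tendsto[OF realization] \<open>e > 0\<close>] by blast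
  moreover have "convex hull (range (\<lambda>n. Pn \<iota> n a)) \<subseteq> union_alg \<iota>"
    using P_union subspace_imp_convex[OF union_alg_subspace[OF realization]]
    by (intro hull_minimal) auto
  ultimately show "\<exists>b\<in>union_alg \<iota>. form_norm E (a - b) < e"
    by blast
qed

end
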